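(* Let $f$ be a complex polynomial of degree $d$ with $f(0)\neq0$, with roots $\zeta_1,\dots,\zeta_d$ (with multiplicity) ordered so that $|\zeta_1|\le\cdots\le|\zeta_d|$, not all of the same modulus. Let $\rho=\min\{|\zeta_{i+1}|/|\zeta_i|:|\zeta_{i+1}|>|\zeta_i|\}$, $I=\{i:1\le i\le d-1,\ |\zeta_i|<|\zeta_{i+1}|\}\cup\{0,d\}$, $N\ge 0$, $R=\rho^{2^N}$, $g=G^Nf=\sum_i g_ix^i$, $r_i=-2^{-N}\log|g_i|$, and for $0\le a<b\le d$ put $S(a,b)=\frac{r_b-r_a}{b-a}$. Assume: (a) $m\ge i_2-i_1$ for all successive elements $i_1<i_2$ of $I$; (b) $2^{-N+1}\log(2^m+2^dR^{-1})-2^{-N+2}\log(1-2^dR^{-1})<E<\frac{\log\rho}{2}$; (c) $0\le i<j<k\le d$. Then: 1. If $i$ and $j$ are successive elements of $I$ and no element of $I$ lies strictly between $j$ and $k$, then $S(i,j)<S(j,k)-E$. 2. If $i$ and $k$ are successive elements of $I$, then $S(i,j)>S(j,k)-E$.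
   Context: $\log$ is the natural logarithm. The Graeffe operator maps a degree $d$ polynomial $f$ to $Gf(x)=(-1)^d f(\sqrt{x})f(-\sqrt{x})$, again of degree $d$; $G^N$ is its $N$-th iterate. Two elements $i_1<i_2$ of $I$ are successive if no element of $I$ lies strictly between them. Hypothesis (b) implicitly requires $2^dR^{-1}<1$. *)

theory Defs
  imports "HOL-Analysis.Analysis" "HOL-Computational_Algebra.Polynomial" "HOL-Library.Extended_Real"
begin

definition graeffe :: "complex poly \<Rightarrow> complex poly" where
  "graeffe f = (THE g. \<forall>y. poly g (y^2) = (-1) ^ degree f * poly f y * poly f (- y))"

text \<open>r_i = -2^(-N) log |g_i|, with the convention log 0 = -infinity (so r_i = +infinity if g_i = 0).\<close>
definition graeffe_r :: "complex poly \<Rightarrow> nat \<Rightarrow> nat \<Rightarrow> ereal" where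
  "graeffe_r f N i = (let c = coeff ((graeffe ^^ N) f) i in
     if c = 0 then \<infinity> else ereal (- ln (norm c) / 2 ^ N))"

definition graeffe_S :: "complex poly \<Rightarrow> nat \<Rightarrow> nat \<Rightarrow> nat \<Rightarrow> ereal" where
  "graeffe_S f N a b = (graeffe_r f N b - graeffe_r f N a) / ereal (real b - real a)"

definition successive :: "nat set \<Rightarrow> nat \<Rightarrow> nat \<Rightarrow> bool" where
  "successive I i1 i2 \<longleftrightarrow> i1 \<in> I \<and> i2 \<in> I \<and> i1 < i2 \<and> (\<forall>x\<in>I. \<not> (i1 < x \<and> x < i2))"

end

theory Submission
  imports Defs
begin

text \<open>After N Graeffe steps the roots of f become the powers \<zeta>_l^(2^N), so by Vieta the t-th
  coefficient of G^N f is lc^(2^N) times a sum, over the t-subsets S of {1..d}, of the products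
  of the root powers outside S. If t lies in a block [i, k] between successive elements of I,
  then |\<zeta>_l| \<le> |\<zeta>_k| / \<rho> for l \<le> i and |\<zeta>_l| \<ge> \<rho> |\<zeta>_k| for l > k, so every subset except the
  at most 2^(k - i) that contain {1..i} and avoid {k+1..d} loses a factor R = \<rho>^(2^N) against
  the product of the d - t largest root powers; at t \<in> I the dominant subset {1..t} is unique.
  Hence r_t is, up to an error of order 2^(-N), the piecewise linear function
  -log|lc| - \<Sum>_{l>t} log|\<zeta>_l|, whose slope on a block is the common log-modulus of its roots
  and increases by at least log \<rho> at each element of I. Hypothesis (b) makes the error small
  compared with E and log \<rho>, so the slopes S(a, b) inherit this convexity.\<close>

section \<open>Graeffe iterates of a product of linear factors\<close>

lemma coeff_prod_linear_factors:
  fixes w :: "nat \<Rightarrow> 'a::comm_ring_1"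
  assumes "finite A"
  shows "coeff (\<Prod>l\<in>A. [:- w l, 1:]) j = (\<Sum>S\<in>{S\<in>Pow A. card S = j}. \<Prod>l\<in>A - S. - w l)"
proof -
  have "(\<Prod>l\<in>A. [:- w l, 1:]) = (\<Prod>l\<in>A. monom 1 1 + [:- w l:])"
    by (simp add: monom_altdef)
  also have "\<dots> = (\<Sum>S\<in>Pow A. (\<Prod>l\<in>S. monom 1 1) * (\<Prod>l\<in>A - S. [:- w l:]))"
    by (rule prod_add[OF assms])
  also have "\<dots> = (\<Sum>S\<in>Pow A. monom (\<Prod>l\<in>A - S. - w l) (card S))"
    by (intro sum.cong refl) (simp add: prod_to_poly monom_power smult_monom)
  finally have "coeff (\<Prod>l\<in>A. [:- w l, 1:]) j = (\<Sum>S\<in>Pow A. if card S = j then \<Prod>l\<in>A - S. - w l else 0)"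
    by (simp add: coeff_sum)
  also have "\<dots> = (\<Sum>S\<in>{S\<in>Pow A. card S = j}. \<Prod>l\<in>A - S. - w l)"
    by (simp add: sum.inter_filter[symmetric] assms)
  finally show ?thesis .
qed

lemma graeffe_smult_prod_linear_factors:
  fixes z :: "nat \<Rightarrow> complex"
  assumes "c \<noteq> 0" and "finite A"
  shows "graeffe (smult c (\<Prod>l\<in>A. [:- z l, 1:])) = smult (c\<^sup>2) (\<Prod>l\<in>A. [:- (z l)\<^sup>2, 1:])"
proof -
  define f where "f = smult c (\<Prod>l\<in>A. [:- z l, 1:])"
  define g where "g = smult (c\<^sup>2) (\<Prod>l\<in>A. [:- (z l)\<^sup>2, 1:])"
  have "degree f = card A"
    using assms by (simp add: f_def degree_prod_eq_sum_degree)
  then have g: "poly g (y\<^sup>2) = (-1) ^ degree f * poly f y * poly f (- y)" for y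
    by (simp add: f_def g_def poly_prod power2_eq_square algebra_simps
        flip: prod.distrib prod_constant)
  have "graeffe f = g"
    unfolding graeffe_def
  proof (rule the_equality)
    fix h assume h: "\<forall>y. poly h (y\<^sup>2) = (-1) ^ degree f * poly f y * poly f (- y)"
    have "poly h x = poly g x" for x
      using h[rule_format, of "csqrt x"] g[of "csqrt x"] by simp
    then show "h = g" using poly_eq_poly_eq_iff by blast
  qed (use g in blast)
  then show ?thesis by (simp add: f_def g_def)
qed

lemma graeffe_funpow_smult_prod_linear_factors:
  fixes z :: "nat \<Rightarrow> complex"
  assumes "c \<noteq> 0" and "finite A"
  shows "(graeffe ^^ N) (smult c (\<Prod>l\<in>A. [:- z l, 1:]))
    = smult (c ^ 2 ^ N) (\<Prod>l\<in>A. [:- (z l ^ 2 ^ N), 1:])"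
proof (induction N)
  case (Suc N)
  then show ?case
    using graeffe_smult_prod_linear_factors[of "c ^ 2 ^ N" A "\<lambda>l. z l ^ 2 ^ N"] assms
    by (simp add: power_mult[symmetric] mult.commute)
qed simp

section \<open>Elementary symmetric sums with separated moduli\<close>

lemma card_diff_eq_card_Int_greaterThan:
  assumes "S \<subseteq> {1..d}" "card S = j"
  shows "card ({1..j} - S) = card (S \<inter> {j<..d})"
proof -
  have fin: "finite S" using assms finite_subset by blast
  have "S = (S \<inter> {1..j}) \<union> (S \<inter> {j<..d})" using assms(1) by auto
  also have "card \<dots> = card (S \<inter> {1..j}) + card (S \<inter> {j<..d})"
    by (rule card_Un_disjoint) (use fin in auto)
  finally have "card S = card (S \<inter> {1..j}) + card (S \<inter> {j<..d})" .
  moreover have "card ({1..j} - S) = j - card (S \<inter> {1..j})"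
    by (simp add: card_Diff_subset_Int fin inf_commute)
  ultimately show ?thesis using assms(2) by linarith
qed

text \<open>Trading the elements of {1..j} - S for those of S \<inter> {j<..d} never increases the sum, and it
  decreases it by at least G if one of the traded elements lies outside the block (i', k'].\<close>

lemma sum_compl_le_dominant:
  fixes \<mu> :: "nat \<Rightarrow> real"
  assumes S: "S \<subseteq> {1..d}" "card S = j"
    and ord: "i' \<le> j" "j \<le> k'"
    and below: "\<forall>l\<in>{1..j}. \<mu> l \<le> c" and above: "\<forall>l\<in>{j<..d}. c \<le> \<mu> l"
    and far_below: "\<forall>l\<in>{1..i'}. \<mu> l \<le> c - G" and far_above: "\<forall>l\<in>{k'<..d}. c + G \<le> \<mu> l"
  shows "(\<Sum>l\<in>{1..d} - S. \<mu> l)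
    \<le> (\<Sum>l\<in>{j<..d}. \<mu> l) - (if {1..i'} \<subseteq> S \<and> S \<inter> {k'<..d} = {} then 0 else G)"
proof -
  define X where "X = {1..j} - S"
  define Y where "Y = S \<inter> {j<..d}"
  have fin: "finite X" "finite Y"
    by (auto simp: X_def Y_def)
  have "j \<le> d"
    using S card_mono[OF finite_atLeastAtMost S(1)] by simp
  then have "{1..d} - S = ({j<..d} - Y) \<union> X"
    using S by (auto simp: X_def Y_def)
  then have "(\<Sum>l\<in>{1..d} - S. \<mu> l) = sum \<mu> (({j<..d} - Y) \<union> X)"
    by simp
  also have "\<dots> = sum \<mu> ({j<..d} - Y) + sum \<mu> X"
    by (rule sum.union_disjoint) (auto simp: X_def Y_def)
  also have "\<dots> = (\<Sum>l\<in>{j<..d}. \<mu> l) - sum \<mu> Y + sum \<mu> X"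
    by (subst sum_diff) (auto simp: Y_def)
  also have "\<dots> = (\<Sum>l\<in>{j<..d}. \<mu> l) - ((\<Sum>l\<in>X. c - \<mu> l) + (\<Sum>l\<in>Y. \<mu> l - c))"
    using card_diff_eq_card_Int_greaterThan[OF S] by (simp add: sum_subtractf X_def Y_def)
  also have "\<dots> \<le> (\<Sum>l\<in>{j<..d}. \<mu> l) - (if {1..i'} \<subseteq> S \<and> S \<inter> {k'<..d} = {} then 0 else G)"
  proof -
    have X_nonneg: "\<forall>l\<in>X. 0 \<le> c - \<mu> l" and Y_nonneg: "\<forall>l\<in>Y. 0 \<le> \<mu> l - c"
      using below above by (auto simp: X_def Y_def)
    have "(if {1..i'} \<subseteq> S \<and> S \<inter> {k'<..d} = {} then 0 else G)
        \<le> (\<Sum>l\<in>X. c - \<mu> l) + (\<Sum>l\<in>Y. \<mu> l - c)"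
    proof (cases "{1..i'} \<subseteq> S \<and> S \<inter> {k'<..d} = {}")
      case True
      then show ?thesis using X_nonneg Y_nonneg by (simp add: sum_nonneg add_nonneg_nonneg)
    next
      case False
      then consider l where "l \<in> {1..i'}" "l \<notin> S" | l where "l \<in> S" "l \<in> {k'<..d}"
        by blast
      then show ?thesis
      proof cases
        case 1
        then have "l \<in> X" using ord by (auto simp: X_def)
        then have "c - \<mu> l \<le> (\<Sum>l\<in>X. c - \<mu> l)"
          using X_nonneg fin by (intro member_le_sum) auto
        moreover have "\<mu> l \<le> c - G" using 1 far_below by auto
        moreover have "0 \<le> (\<Sum>l\<in>Y. \<mu> l - c)" using Y_nonneg by (simp add: sum_nonneg)
        ultimately show ?thesis by (subst if_not_P[OF False]) linarith
      next
        case 2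
        then have "l \<in> Y" using ord by (auto simp: Y_def)
        then have "\<mu> l - c \<le> (\<Sum>l\<in>Y. \<mu> l - c)"
          using Y_nonneg fin by (intro member_le_sum) auto
        moreover have "c + G \<le> \<mu> l" using 2 far_above by auto
        moreover have "0 \<le> (\<Sum>l\<in>X. c - \<mu> l)" using X_nonneg by (simp add: sum_nonneg)
        ultimately show ?thesis by (subst if_not_P[OF False]) linarith
      qed
    qed
    then show ?thesis by linarith
  qed
  finally show ?thesis .
qed

lemma card_subsets_between_le:
  "card {S\<in>Pow {1..d}. {1..i} \<subseteq> S \<and> S \<inter> {k<..d} = {}} \<le> 2 ^ (k - i)"
proof -
  have "{S\<in>Pow {1..d}. {1..i} \<subseteq> S \<and> S \<inter> {k<..d} = {}} \<subseteq> (\<lambda>C. {1..i} \<union> C) ` Pow {i<..k}"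
  proof
    fix S assume "S \<in> {S\<in>Pow {1..d}. {1..i} \<subseteq> S \<and> S \<inter> {k<..d} = {}}"
    then have "S = {1..i} \<union> (S \<inter> {i<..k})"
      by (auto simp: subset_iff disjoint_iff)
    then show "S \<in> (\<lambda>C. {1..i} \<union> C) ` Pow {i<..k}" by blast
  qed
  then have "card {S\<in>Pow {1..d}. {1..i} \<subseteq> S \<and> S \<inter> {k<..d} = {}}
      \<le> card ((\<lambda>C. {1..i} \<union> C) ` Pow {i<..k})"
    by (intro card_mono) auto
  also have "\<dots> \<le> card (Pow {i<..k})" by (rule card_image_le) auto
  finally show ?thesis by (simp add: card_Pow)
qed

lemma norm_prod_eq_exp_sum:
  fixes w :: "nat \<Rightarrow> 'a::real_normed_field"
  assumes "\<forall>l\<in>B. norm (w l) = exp (\<mu> l)" "finite B"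
  shows "norm (\<Prod>l\<in>B. w l) = exp (\<Sum>l\<in>B. \<mu> l)"
  using assms by (simp add: exp_sum flip: prod_norm)

lemma norm_esym_le_block:
  fixes w :: "nat \<Rightarrow> 'a::real_normed_field" and \<mu> :: "nat \<Rightarrow> real"
  assumes w: "\<forall>l\<in>{1..d}. norm (w l) = exp (\<mu> l)"
    and ord: "i' \<le> j" "j \<le> k'" and "0 \<le> G"
    and below: "\<forall>l\<in>{1..j}. \<mu> l \<le> c" and above: "\<forall>l\<in>{j<..d}. c \<le> \<mu> l"
    and far_below: "\<forall>l\<in>{1..i'}. \<mu> l \<le> c - G" and far_above: "\<forall>l\<in>{k'<..d}. c + G \<le> \<mu> l"
  shows "norm (\<Sum>S\<in>{S\<in>Pow {1..d}. card S = j}. \<Prod>l\<in>{1..d} - S. w l)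
    \<le> exp (\<Sum>l\<in>{j<..d}. \<mu> l) * (2 ^ (k' - i') + 2 ^ d * exp (- G))"
proof -
  define F where "F = {S\<in>Pow {1..d}. card S = j}"
  define M where "M = exp (\<Sum>l\<in>{j<..d}. \<mu> l)"
  define good where "good S \<longleftrightarrow> {1..i'} \<subseteq> S \<and> S \<inter> {k'<..d} = {}" for S
  have term_le: "norm (\<Prod>l\<in>{1..d} - S. w l) \<le> (if good S then M else 0) + M * exp (- G)"
    if "S \<in> F" for S
  proof -
    have "norm (\<Prod>l\<in>{1..d} - S. w l) = exp (\<Sum>l\<in>{1..d} - S. \<mu> l)"
      using w by (intro norm_prod_eq_exp_sum) auto
    also have "\<dots> \<le> exp ((\<Sum>l\<in>{j<..d}. \<mu> l) - (if good S then 0 else G))"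
      using that sum_compl_le_dominant[OF _ _ ord below above far_below far_above]
      by (simp add: F_def good_def)
    also have "\<dots> \<le> (if good S then M else 0) + M * exp (- G)"
      using \<open>0 \<le> G\<close> by (simp add: M_def exp_diff exp_minus field_simps)
    finally show ?thesis .
  qed
  have card_good: "real (card {S\<in>F. good S}) \<le> 2 ^ (k' - i')"
  proof -
    have "card {S\<in>F. good S} \<le> card {S\<in>Pow {1..d}. good S}"
      by (intro card_mono) (auto simp: F_def)
    also have "\<dots> \<le> 2 ^ (k' - i')"
      unfolding good_def by (rule card_subsets_between_le)
    finally show ?thesis by (simp add: numeral_power_le_of_nat_cancel_iff flip: of_nat_le_iff)
  qed
  have card_F: "real (card F) \<le> 2 ^ d"
  proof -
    have "card F \<le> card (Pow {1..d})" by (intro card_mono) (auto simp: F_def)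
    then show ?thesis by (simp add: card_Pow flip: of_nat_le_iff)
  qed
  have "norm (\<Sum>S\<in>F. \<Prod>l\<in>{1..d} - S. w l) \<le> (\<Sum>S\<in>F. (if good S then M else 0) + M * exp (- G))"
    by (rule order_trans[OF norm_sum sum_mono]) (use term_le in auto)
  also have "\<dots> = card {S\<in>F. good S} * M + card F * (M * exp (- G))"
    by (simp add: sum.distrib sum.inter_filter[symmetric] F_def)
  also have "\<dots> \<le> 2 ^ (k' - i') * M + 2 ^ d * (M * exp (- G))"
    using card_good card_F by (intro add_mono mult_right_mono) (auto simp: M_def)
  finally show ?thesis by (simp add: F_def M_def algebra_simps)
qed

lemma norm_esym_ge_dominant:
  fixes w :: "nat \<Rightarrow> 'a::real_normed_field" and \<mu> :: "nat \<Rightarrow> real"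
  assumes w: "\<forall>l\<in>{1..d}. norm (w l) = exp (\<mu> l)"
    and "j \<le> d" and "0 \<le> G"
    and below: "\<forall>l\<in>{1..j}. \<mu> l \<le> c - G" and above: "\<forall>l\<in>{j<..d}. c \<le> \<mu> l"
  shows "exp (\<Sum>l\<in>{j<..d}. \<mu> l) * (1 - 2 ^ d * exp (- G))
    \<le> norm (\<Sum>S\<in>{S\<in>Pow {1..d}. card S = j}. \<Prod>l\<in>{1..d} - S. w l)"
proof -
  define F where "F = {S\<in>Pow {1..d}. card S = j}"
  define M where "M = exp (\<Sum>l\<in>{j<..d}. \<mu> l)"
  define T where "T S = (\<Prod>l\<in>{1..d} - S. w l)" for S
  have dominant: "{1..j} \<in> F" and compl: "{1..d} - {1..j} = {j<..d}"
    using \<open>j \<le> d\<close> by (auto simp: F_def)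
  have T_dominant: "norm (T {1..j}) = M"
    unfolding T_def M_def compl[symmetric] using w by (intro norm_prod_eq_exp_sum) auto
  have T_other: "norm (T S) \<le> M * exp (- G)" if "S \<in> F - {{1..j}}" for S
  proof -
    have "\<not> {1..j} \<subseteq> S"
      using that card_subset_eq[of S "{1..j}"] by (auto simp: F_def intro: finite_subset)
    moreover have "(\<Sum>l\<in>{1..d} - S. \<mu> l)
        \<le> (\<Sum>l\<in>{j<..d}. \<mu> l) - (if {1..j} \<subseteq> S \<and> S \<inter> {d<..d} = {} then 0 else G)"
      using that below above \<open>0 \<le> G\<close> \<open>j \<le> d\<close>
      by (intro sum_compl_le_dominant[where c = c]) (auto simp: F_def)
    ultimately have "(\<Sum>l\<in>{1..d} - S. \<mu> l) \<le> (\<Sum>l\<in>{j<..d}. \<mu> l) - G"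
      by simp
    moreover have "norm (T S) = exp (\<Sum>l\<in>{1..d} - S. \<mu> l)"
      unfolding T_def using w by (intro norm_prod_eq_exp_sum) auto
    ultimately show ?thesis by (simp add: M_def flip: exp_add)
  qed
  have "norm (\<Sum>S\<in>F - {{1..j}}. T S) \<le> (\<Sum>S\<in>F - {{1..j}}. M * exp (- G))"
    by (rule order_trans[OF norm_sum sum_mono]) (use T_other in auto)
  also have "\<dots> \<le> 2 ^ d * (M * exp (- G))"
  proof -
    have "card (F - {{1..j}}) \<le> card (Pow {1..d})" by (intro card_mono) (auto simp: F_def)
    then have "real (card (F - {{1..j}})) \<le> 2 ^ d" by (simp add: card_Pow flip: of_nat_le_iff)
    then show ?thesis by (simp add: M_def mult_right_mono)
  qed
  finally have "norm (\<Sum>S\<in>F - {{1..j}}. T S) \<le> 2 ^ d * (M * exp (- G))" .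
  moreover have "(\<Sum>S\<in>F. T S) = T {1..j} + (\<Sum>S\<in>F - {{1..j}}. T S)"
    using dominant by (simp add: sum.remove F_def)
  ultimately have "M - 2 ^ d * (M * exp (- G)) \<le> norm (\<Sum>S\<in>F. T S)"
    using T_dominant norm_diff_ineq[of "T {1..j}" "\<Sum>S\<in>F - {{1..j}}. T S"] by simp
  then show ?thesis by (simp add: F_def M_def T_def algebra_simps)
qed


section \<open>Difference quotients in the extended reals\<close>

lemma ereal_slope_ge:
  fixes x y :: ereal
  assumes "x \<le> ereal (u + e1)" "ereal (v - e2) \<le> y"
    and "v - u = p * \<alpha>" "1 \<le> p" "0 \<le> e1 + e2"
  shows "ereal (\<alpha> - (e1 + e2)) \<le> (y - x) / ereal p"
proof -
  have "ereal (\<alpha> - (e1 + e2)) \<le> ereal ((v - e2 - (u + e1)) / p)"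
    using assms(3-5) mult_right_mono[of 1 p "e1 + e2"]
    by (simp add: field_simps)
  also have "\<dots> = (ereal (v - e2) - ereal (u + e1)) / ereal p"
    using assms(4) by simp
  also have "\<dots> \<le> (y - x) / ereal p"
    using assms(1,2,4) by (intro ereal_divide_right_mono ereal_minus_mono) auto
  finally show ?thesis .
qed

lemma ereal_slope_le:
  fixes x y :: ereal
  assumes "ereal (u - e1) \<le> x" "y \<le> ereal (v + e2)"
    and "v - u = p * \<alpha>" "1 \<le> p" "0 \<le> e1 + e2"
  shows "(y - x) / ereal p \<le> ereal (\<alpha> + (e1 + e2))"
proof -
  have "(y - x) / ereal p \<le> (ereal (v + e2) - ereal (u - e1)) / ereal p"
    using assms(1,2,4) by (intro ereal_divide_right_mono ereal_minus_mono) auto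
  also have "\<dots> = ereal ((v + e2 - (u - e1)) / p)"
    using assms(4) by simp
  also have "\<dots> \<le> ereal (\<alpha> + (e1 + e2))"
    using assms(3-5) mult_right_mono[of 1 p "e1 + e2"]
    by (simp add: field_simps)
  finally show ?thesis .
qed


section \<open>Polynomials with roots sorted by modulus\<close>

lemma exp_pow2_mult_ln:
  fixes x :: real
  assumes "0 < x"
  shows "exp (2 ^ N * ln x) = x ^ 2 ^ N"
proof -
  have "ln (x ^ 2 ^ N) = 2 ^ N * ln x"
    using assms by (simp add: ln_realpow)
  then show ?thesis
    using assms by (metis exp_ln zero_less_power)
qed

lemma successive_next:
  assumes "finite I" "j \<in> I" "x \<in> I" "k \<le> x" "j < k" "\<forall>y\<in>I. \<not> (j < y \<and> y < k)"
  shows "\<exists>k'. successive I j k' \<and> k \<le> k'"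
proof -
  define k' where "k' = Min {y\<in>I. k \<le> y}"
  have "k' \<in> {y\<in>I. k \<le> y}"
    unfolding k'_def using assms by (intro Min_in) auto
  moreover have "\<not> (j < y \<and> y < k')" if "y \<in> I" for y
  proof (cases "y < k")
    case False
    then have "k' \<le> y"
      unfolding k'_def using that assms(1) by (intro Min_le) auto
    then show ?thesis by simp
  qed (use that assms(6) in blast)
  ultimately show ?thesis
    using assms by (auto simp: successive_def)
qed

locale sorted_roots =
  fixes f :: "complex poly" and \<zeta> :: "nat \<Rightarrow> complex" and d :: nat
  assumes poly_0_nonzero: "poly f 0 \<noteq> 0"
    and roots: "f = smult (lead_coeff f) (\<Prod>l\<in>{1..d}. [:- \<zeta> l, 1:])"
    and norm_roots_le_Suc: "\<And>l. 1 \<le> l \<Longrightarrow> l < d \<Longrightarrow> norm (\<zeta> l) \<le> norm (\<zeta> (Suc l))"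
    and not_all_eq: "\<exists>a\<in>{1..d}. \<exists>b\<in>{1..d}. norm (\<zeta> a) \<noteq> norm (\<zeta> b)"
begin

definition gap_ratio :: real where
  "gap_ratio = Min {norm (\<zeta> (Suc l)) / norm (\<zeta> l) | l. 1 \<le> l \<and> l < d \<and> norm (\<zeta> l) < norm (\<zeta> (Suc l))}"

definition jumps :: "nat set" where
  "jumps = {l. 1 \<le> l \<and> l \<le> d - 1 \<and> norm (\<zeta> l) < norm (\<zeta> (Suc l))} \<union> {0, d}"

lemma lead_coeff_nonzero: "lead_coeff f \<noteq> 0"
  using poly_0_nonzero by auto

lemma roots_nonzero: "l \<in> {1..d} \<Longrightarrow> \<zeta> l \<noteq> 0"
  using poly_0_nonzero by (subst (asm) roots) (auto simp: poly_prod)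

lemma norm_roots_mono:
  assumes "1 \<le> p" "p \<le> q" "q \<le> d"
  shows "norm (\<zeta> p) \<le> norm (\<zeta> q)"
  using assms(2,3)
proof (induction q rule: dec_induct)
  case (step q)
  then show ?case using norm_roots_le_Suc[of q] assms(1) by simp
qed simp

lemma jump_exists: "\<exists>l. 1 \<le> l \<and> l < d \<and> norm (\<zeta> l) < norm (\<zeta> (Suc l))"
proof (rule ccontr)
  assume no_jump: "\<not> ?thesis"
  have "norm (\<zeta> q) \<le> norm (\<zeta> p)" if "1 \<le> p" "p \<le> q" "q \<le> d" for p q
    using that(2,3)
  proof (induction q rule: dec_induct)
    case (step q)
    then have "1 \<le> q" "q < d"
      using that(1) by auto
    then have "\<not> norm (\<zeta> q) < norm (\<zeta> (Suc q))"
      using no_jump by blast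
    then show ?case using step by simp
  qed simp
  then have eq: "norm (\<zeta> p) = norm (\<zeta> q)" if "1 \<le> p" "p \<le> q" "q \<le> d" for p q
    using that norm_roots_mono by (simp add: order_antisym)
  obtain a b where ab: "1 \<le> a" "a \<le> d" "1 \<le> b" "b \<le> d" "norm (\<zeta> a) \<noteq> norm (\<zeta> b)"
    using not_all_eq by auto
  show False
  proof (cases "a \<le> b")
    case True
    then show False using eq[of a b] ab by simp
  next
    case False
    then show False using eq[of b a] ab by simp
  qed
qed

lemma gap_ratio_le:
  assumes "1 \<le> l" "l < d" "norm (\<zeta> l) < norm (\<zeta> (Suc l))"
  shows "gap_ratio \<le> norm (\<zeta> (Suc l)) / norm (\<zeta> l)"
  unfolding gap_ratio_def using assms by (intro Min_le) (auto intro: finite_image_set)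

lemma gap_ratio_gt_1: "1 < gap_ratio"
proof -
  have "gap_ratio \<in> {norm (\<zeta> (Suc l)) / norm (\<zeta> l) | l. 1 \<le> l \<and> l < d \<and> norm (\<zeta> l) < norm (\<zeta> (Suc l))}"
    unfolding gap_ratio_def using jump_exists by (intro Min_in) (auto intro: finite_image_set)
  then obtain l where "1 \<le> l" "l < d" "norm (\<zeta> l) < norm (\<zeta> (Suc l))"
      "gap_ratio = norm (\<zeta> (Suc l)) / norm (\<zeta> l)"
    by blast
  then show ?thesis using roots_nonzero[of l] by simp
qed

lemma ln_norm_roots_mono: "1 \<le> p \<Longrightarrow> p \<le> q \<Longrightarrow> q \<le> d \<Longrightarrow> ln (norm (\<zeta> p)) \<le> ln (norm (\<zeta> q))"
  using norm_roots_mono roots_nonzero by simp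

lemma ln_norm_roots_jump:
  assumes "t \<in> jumps" "l \<in> {1..t}" "l' \<in> {t<..d}"
  shows "ln (norm (\<zeta> l)) + ln gap_ratio \<le> ln (norm (\<zeta> l'))"
proof -
  have t: "1 \<le> t" "t < d" "norm (\<zeta> t) < norm (\<zeta> (Suc t))"
    using assms by (auto simp: jumps_def)
  have "ln (norm (\<zeta> l)) + ln gap_ratio \<le> ln (norm (\<zeta> t)) + ln (norm (\<zeta> (Suc t)) / norm (\<zeta> t))"
    using assms t gap_ratio_le[OF t] gap_ratio_gt_1 ln_norm_roots_mono[of l t] by (intro add_mono) auto
  also have "\<dots> = ln (norm (\<zeta> (Suc t)))"
    using roots_nonzero[of t] roots_nonzero[of "Suc t"] t by (simp add: ln_div)
  also have "\<dots> \<le> ln (norm (\<zeta> l'))"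
    using assms t by (intro ln_norm_roots_mono) auto
  finally show ?thesis .
qed

lemma jumps_le: "t \<in> jumps \<Longrightarrow> t \<le> d"
  by (auto simp: jumps_def)

lemma finite_jumps: "finite jumps"
  using jumps_le by (meson finite_atMost finite_subset subsetI atMost_iff)

lemma d_in_jumps: "d \<in> jumps"
  by (simp add: jumps_def)

lemma norm_roots_eq_in_block:
  assumes "successive jumps i k" "i < l" "l \<le> k"
  shows "norm (\<zeta> l) = norm (\<zeta> k)"
  using assms(3)
proof (induction l rule: inc_induct)
  case (step l)
  have "l \<notin> jumps" "k \<le> d"
    using assms step jumps_le by (auto simp: successive_def)
  then have "\<not> norm (\<zeta> l) < norm (\<zeta> (Suc l))"
    using assms(2) step by (auto simp: jumps_def)
  then show ?case
    using step norm_roots_mono[of l "Suc l"] assms(2) \<open>k \<le> d\<close> by simp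
qed simp

text \<open>The limit of graeffe_r f N t as N tends to infinity, for t \<in> jumps.\<close>

definition limit_r :: "nat \<Rightarrow> real" where
  "limit_r t = - ln (norm (lead_coeff f)) - (\<Sum>l\<in>{t<..d}. ln (norm (\<zeta> l)))"

lemma limit_r_diff_in_block:
  assumes "successive jumps i k" "i \<le> a" "a \<le> b" "b \<le> k"
  shows "limit_r b - limit_r a = (real b - real a) * ln (norm (\<zeta> k))"
proof -
  have "k \<le> d"
    using assms(1) jumps_le by (auto simp: successive_def)
  then have "{a<..d} = {a<..b} \<union> {b<..d}"
    using assms by auto
  then have "limit_r a = limit_r b - (\<Sum>l\<in>{a<..b}. ln (norm (\<zeta> l)))"
    by (simp add: limit_r_def sum.union_disjoint)
  also have "(\<Sum>l\<in>{a<..b}. ln (norm (\<zeta> l))) = (\<Sum>l\<in>{a<..b}. ln (norm (\<zeta> k)))"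
  proof (intro sum.cong refl)
    fix l assume "l \<in> {a<..b}"
    then show "ln (norm (\<zeta> l)) = ln (norm (\<zeta> k))"
      using norm_roots_eq_in_block[OF assms(1), of l] assms by simp
  qed
  finally show ?thesis
    using assms(3) by (simp add: of_nat_diff)
qed

definition esym_pow :: "nat \<Rightarrow> nat \<Rightarrow> complex" where
  "esym_pow N t = (\<Sum>S\<in>{S\<in>Pow {1..d}. card S = t}. \<Prod>l\<in>{1..d} - S. - (\<zeta> l ^ 2 ^ N))"

lemma coeff_graeffe_funpow: "coeff ((graeffe ^^ N) f) t = lead_coeff f ^ 2 ^ N * esym_pow N t"
proof -
  have "(graeffe ^^ N) f = (graeffe ^^ N) (smult (lead_coeff f) (\<Prod>l\<in>{1..d}. [:- \<zeta> l, 1:]))"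
    by (simp only: roots[symmetric])
  also have "\<dots> = smult (lead_coeff f ^ 2 ^ N) (\<Prod>l\<in>{1..d}. [:- (\<zeta> l ^ 2 ^ N), 1:])"
    by (rule graeffe_funpow_smult_prod_linear_factors[OF lead_coeff_nonzero]) simp
  finally show ?thesis
    by (simp add: coeff_prod_linear_factors esym_pow_def)
qed

lemma graeffe_r_eq_esym_pow:
  "graeffe_r f N t = (if esym_pow N t = 0 then \<infinity>
     else ereal (- ln (norm (lead_coeff f)) - ln (norm (esym_pow N t)) / 2 ^ N))"
proof (cases "esym_pow N t = 0")
  case False
  have "ln (norm (lead_coeff f ^ 2 ^ N * esym_pow N t))
      = 2 ^ N * ln (norm (lead_coeff f)) + ln (norm (esym_pow N t))"
    using False lead_coeff_nonzero by (simp add: norm_mult norm_power ln_mult ln_realpow)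
  then show ?thesis
    using False lead_coeff_nonzero by (simp add: graeffe_r_def coeff_graeffe_funpow field_simps)
qed (simp add: graeffe_r_def coeff_graeffe_funpow)

lemma graeffe_r_ge_of_norm_le:
  assumes "0 < B" "norm (esym_pow N t) \<le> exp (\<Sum>l\<in>{t<..d}. 2 ^ N * ln (norm (\<zeta> l))) * B"
  shows "ereal (limit_r t - ln B / 2 ^ N) \<le> graeffe_r f N t"
proof (cases "esym_pow N t = 0")
  case False
  have "ln (norm (esym_pow N t)) \<le> ln (exp (\<Sum>l\<in>{t<..d}. 2 ^ N * ln (norm (\<zeta> l))) * B)"
    using assms False by simp
  also have "\<dots> = 2 ^ N * (\<Sum>l\<in>{t<..d}. ln (norm (\<zeta> l))) + ln B"
    using assms(1) by (simp add: ln_mult sum_distrib_left)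
  finally have "ln (norm (esym_pow N t)) / 2 ^ N \<le> (\<Sum>l\<in>{t<..d}. ln (norm (\<zeta> l))) + ln B / 2 ^ N"
    by (simp add: field_simps)
  then show ?thesis
    using False by (simp add: graeffe_r_eq_esym_pow limit_r_def)
qed (simp add: graeffe_r_eq_esym_pow)

lemma graeffe_r_le_of_norm_ge:
  assumes "0 < B" "exp (\<Sum>l\<in>{t<..d}. 2 ^ N * ln (norm (\<zeta> l))) * B \<le> norm (esym_pow N t)"
  shows "graeffe_r f N t \<le> ereal (limit_r t - ln B / 2 ^ N)"
proof -
  have pos: "0 < exp (\<Sum>l\<in>{t<..d}. 2 ^ N * ln (norm (\<zeta> l))) * B"
    using assms(1) by simp
  then have nonzero: "esym_pow N t \<noteq> 0"
    using assms(2) by (metis norm_zero not_le)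
  have "2 ^ N * (\<Sum>l\<in>{t<..d}. ln (norm (\<zeta> l))) + ln B
      = ln (exp (\<Sum>l\<in>{t<..d}. 2 ^ N * ln (norm (\<zeta> l))) * B)"
    using assms(1) by (simp add: ln_mult sum_distrib_left)
  also have "\<dots> \<le> ln (norm (esym_pow N t))"
    using assms(2) pos by (subst ln_le_cancel_iff) auto
  finally have "(2 ^ N * (\<Sum>l\<in>{t<..d}. ln (norm (\<zeta> l))) + ln B) / 2 ^ N
      \<le> ln (norm (esym_pow N t)) / 2 ^ N"
    by (rule divide_right_mono) simp
  then have "(\<Sum>l\<in>{t<..d}. ln (norm (\<zeta> l))) + ln B / 2 ^ N \<le> ln (norm (esym_pow N t)) / 2 ^ N"
    by (simp add: add_divide_distrib)
  then show ?thesis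
    using nonzero by (simp add: graeffe_r_eq_esym_pow limit_r_def)
qed

text \<open>In the notation of the theorem defect N = 2^d / R, and hypothesis (b) reads
  2 * lower_error N m + 4 * upper_error N < E.\<close>

definition defect :: "nat \<Rightarrow> real" where
  "defect N = 2 ^ d / gap_ratio ^ 2 ^ N"

definition lower_error :: "nat \<Rightarrow> nat \<Rightarrow> real" where
  "lower_error N n = ln (2 ^ n + defect N) / 2 ^ N"

definition upper_error :: "nat \<Rightarrow> real" where
  "upper_error N = - ln (1 - defect N) / 2 ^ N"

lemma defect_pos: "0 < defect N"
  using gap_ratio_gt_1 by (simp add: defect_def)

lemma defect_eq_exp: "2 ^ d * exp (- (2 ^ N * ln gap_ratio)) = defect N"
  using gap_ratio_gt_1 by (simp add: defect_def exp_minus divide_inverse exp_pow2_mult_ln)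

lemma norm_minus_root_power: "l \<in> {1..d} \<Longrightarrow> norm (- (\<zeta> l ^ 2 ^ N)) = exp (2 ^ N * ln (norm (\<zeta> l)))"
  using roots_nonzero[of l] by (simp add: norm_power exp_pow2_mult_ln)

lemma graeffe_r_ge_in_block:
  assumes "successive jumps i k" "i \<le> t" "t \<le> k"
  shows "ereal (limit_r t - lower_error N (k - i)) \<le> graeffe_r f N t"
proof -
  have ik: "i \<in> jumps" "k \<in> jumps" "i < k" "k \<le> d"
    using assms(1) jumps_le by (auto simp: successive_def)
  define ln_k where "ln_k = ln (norm (\<zeta> k))"
  define g where "g = ln gap_ratio"
  have below: "ln (norm (\<zeta> l)) \<le> ln_k" if "l \<in> {1..t}" for l
    using that assms ik by (auto simp: ln_k_def intro: ln_norm_roots_mono)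
  have above: "ln_k \<le> ln (norm (\<zeta> l))" if "l \<in> {t<..d}" for l
  proof (cases "l \<le> k")
    case True
    then show ?thesis
      using that assms norm_roots_eq_in_block[OF assms(1), of l] by (simp add: ln_k_def)
  qed (use that ik in \<open>auto simp: ln_k_def intro: ln_norm_roots_mono\<close>)
  have far_below: "ln (norm (\<zeta> l)) \<le> ln_k - g" if "l \<in> {1..i}" for l
    using ln_norm_roots_jump[of i l k] that ik by (simp add: ln_k_def g_def)
  have far_above: "ln_k + g \<le> ln (norm (\<zeta> l))" if "l \<in> {k<..d}" for l
    using ln_norm_roots_jump[of k k l] that ik by (simp add: ln_k_def g_def)
  have "norm (esym_pow N t)
      \<le> exp (\<Sum>l\<in>{t<..d}. 2 ^ N * ln (norm (\<zeta> l))) * (2 ^ (k - i) + 2 ^ d * exp (- (2 ^ N * g)))"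
    unfolding esym_pow_def
  proof (rule norm_esym_le_block[where c = "2 ^ N * ln_k"])
    show "0 \<le> 2 ^ N * g"
      using gap_ratio_gt_1 by (simp add: g_def)
  qed (use assms norm_minus_root_power below above far_below far_above in
      \<open>auto simp flip: right_diff_distrib distrib_left\<close>)
  then have "ereal (limit_r t - ln (2 ^ (k - i) + defect N) / 2 ^ N) \<le> graeffe_r f N t"
    using defect_pos[of N] by (intro graeffe_r_ge_of_norm_le) (auto simp: defect_eq_exp g_def add_pos_pos)
  then show ?thesis
    by (simp add: lower_error_def)
qed

lemma graeffe_r_le_at_jump:
  assumes "t \<in> jumps" "defect N < 1"
  shows "graeffe_r f N t \<le> ereal (limit_r t + upper_error N)"
proof -
  define g where "g = ln gap_ratio"
  define c where "c = (if t = 0 then ln (norm (\<zeta> 1)) else ln (norm (\<zeta> t)) + g)"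
  have "t \<le> d"
    using assms(1) jumps_le by simp
  have below: "ln (norm (\<zeta> l)) \<le> c - g" if "l \<in> {1..t}" for l
    using that \<open>t \<le> d\<close> by (auto simp: c_def intro: ln_norm_roots_mono)
  have above: "c \<le> ln (norm (\<zeta> l))" if "l \<in> {t<..d}" for l
    using that ln_norm_roots_jump[OF assms(1), of t l] \<open>t \<le> d\<close>
    by (auto simp: c_def g_def intro: ln_norm_roots_mono)
  have "exp (\<Sum>l\<in>{t<..d}. 2 ^ N * ln (norm (\<zeta> l))) * (1 - 2 ^ d * exp (- (2 ^ N * g)))
      \<le> norm (esym_pow N t)"
    unfolding esym_pow_def
  proof (rule norm_esym_ge_dominant[where c = "2 ^ N * c"])
    show "0 \<le> 2 ^ N * g"
      using gap_ratio_gt_1 by (simp add: g_def)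
  qed (use \<open>t \<le> d\<close> norm_minus_root_power below above in
      \<open>auto simp flip: right_diff_distrib distrib_left\<close>)
  then have "graeffe_r f N t \<le> ereal (limit_r t - ln (1 - defect N) / 2 ^ N)"
    using assms(2) by (intro graeffe_r_le_of_norm_ge) (auto simp: defect_eq_exp g_def)
  then show ?thesis
    by (simp add: upper_error_def)
qed

lemma upper_error_nonneg: "defect N < 1 \<Longrightarrow> 0 \<le> upper_error N"
  using defect_pos[of N] by (simp add: upper_error_def divide_nonpos_pos)

lemma lower_error_mono: "n \<le> m \<Longrightarrow> lower_error N n \<le> lower_error N m"
  using defect_pos[of N] by (simp add: lower_error_def divide_right_mono add_pos_pos)

lemma lower_error_nonneg: "0 \<le> lower_error N n"
  using defect_pos[of N] by (simp add: lower_error_def add_increasing2)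

lemma graeffe_S_ge_from_jump:
  assumes "successive jumps i k" "i < b" "b \<le> k" "defect N < 1"
  shows "ereal (ln (norm (\<zeta> k)) - (upper_error N + lower_error N (k - i))) \<le> graeffe_S f N i b"
proof -
  have "graeffe_r f N i \<le> ereal (limit_r i + upper_error N)"
    using assms by (intro graeffe_r_le_at_jump) (auto simp: successive_def)
  moreover have "ereal (limit_r b - lower_error N (k - i)) \<le> graeffe_r f N b"
    using assms by (intro graeffe_r_ge_in_block) auto
  moreover have "limit_r b - limit_r i = (real b - real i) * ln (norm (\<zeta> k))"
    using assms by (intro limit_r_diff_in_block) auto
  ultimately show ?thesis
    unfolding graeffe_S_def using assms upper_error_nonneg lower_error_nonneg
    by (intro ereal_slope_ge) (auto intro: add_nonneg_nonneg)
qed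

lemma graeffe_S_le_to_jump:
  assumes "successive jumps i k" "i \<le> a" "a < k" "defect N < 1"
  shows "graeffe_S f N a k \<le> ereal (ln (norm (\<zeta> k)) + (lower_error N (k - i) + upper_error N))"
proof -
  have "ereal (limit_r a - lower_error N (k - i)) \<le> graeffe_r f N a"
    using assms by (intro graeffe_r_ge_in_block) auto
  moreover have "graeffe_r f N k \<le> ereal (limit_r k + upper_error N)"
    using assms by (intro graeffe_r_le_at_jump) (auto simp: successive_def)
  moreover have "limit_r k - limit_r a = (real k - real a) * ln (norm (\<zeta> k))"
    using assms by (intro limit_r_diff_in_block) auto
  ultimately show ?thesis
    unfolding graeffe_S_def using assms upper_error_nonneg lower_error_nonneg
    by (intro ereal_slope_le) (auto intro: add_nonneg_nonneg)
qed

lemma graeffe_S_lt_at_jump: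
  assumes ij: "successive jumps i j" and jk: "j < k" "k \<le> d"
    and no_jump: "\<forall>x\<in>jumps. \<not> (j < x \<and> x < k)"
    and "defect N < 1" and m: "\<And>i1 i2. successive jumps i1 i2 \<Longrightarrow> i2 - i1 \<le> m"
    and small: "2 * (lower_error N m + upper_error N) + E < ln gap_ratio"
  shows "graeffe_S f N i j < graeffe_S f N j k - ereal E"
proof -
  have j: "j \<in> jumps" "1 \<le> j"
    using ij by (auto simp: successive_def)
  obtain k' where jk': "successive jumps j k'" "k \<le> k'"
    using successive_next[OF finite_jumps j(1) d_in_jumps jk(2,1) no_jump] by blast
  have "k' \<le> d"
    using jk' jumps_le by (auto simp: successive_def)
  have "graeffe_S f N i j \<le> ereal (ln (norm (\<zeta> j)) + (lower_error N (j - i) + upper_error N))"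
    using ij assms by (intro graeffe_S_le_to_jump) (auto simp: successive_def)
  also have "\<dots> \<le> ereal (ln (norm (\<zeta> j)) + (lower_error N m + upper_error N))"
    using lower_error_mono[OF m[OF ij]] by simp
  also have "\<dots> < ereal (ln (norm (\<zeta> k')) - (upper_error N + lower_error N m) - E)"
    using ln_norm_roots_jump[OF j(1), of j k'] small j jk jk' \<open>k' \<le> d\<close> by simp
  also have "\<dots> \<le> ereal (ln (norm (\<zeta> k')) - (upper_error N + lower_error N (k' - j)) - E)"
    using lower_error_mono[OF m[OF jk'(1)]] by simp
  also have "\<dots> \<le> graeffe_S f N j k - ereal E"
    using ereal_minus_mono[OF graeffe_S_ge_from_jump[OF jk'(1)] order_refl, of k N "ereal E"]
      jk jk' assms(5) by simp
  finally show ?thesis .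
qed

lemma graeffe_S_gt_in_block:
  assumes ik: "successive jumps i k" and "i < j" "j < k" and "defect N < 1" and "k - i \<le> m"
    and small: "2 * (lower_error N m + upper_error N) < E"
  shows "graeffe_S f N j k - ereal E < graeffe_S f N i j"
proof -
  have "graeffe_S f N j k - ereal E
      \<le> ereal (ln (norm (\<zeta> k)) + (lower_error N (k - i) + upper_error N)) - ereal E"
    using assms by (intro ereal_minus_mono graeffe_S_le_to_jump) auto
  also have "\<dots> < ereal (ln (norm (\<zeta> k)) - (upper_error N + lower_error N (k - i)))"
    using lower_error_mono[OF \<open>k - i \<le> m\<close>, of N] small by simp
  also have "\<dots> \<le> graeffe_S f N i j"
    using assms by (intro graeffe_S_ge_from_jump) auto
  finally show ?thesis .
qed

end

theorem mainTheorem5: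
  fixes f :: "complex poly" and \<zeta> :: "nat \<Rightarrow> complex" and d N m i j k :: nat and E R :: real
  assumes deg: "degree f = d"
    and f0: "poly f 0 \<noteq> 0"
    and roots: "f = smult (lead_coeff f) (\<Prod>l\<in>{1..d}. [:- \<zeta> l, 1:])"
    and ordered: "\<And>l. 1 \<le> l \<Longrightarrow> l < d \<Longrightarrow> norm (\<zeta> l) \<le> norm (\<zeta> (Suc l))"
    and not_all_eq: "\<exists>a\<in>{1..d}. \<exists>b\<in>{1..d}. norm (\<zeta> a) \<noteq> norm (\<zeta> b)"
  defines "\<rho> \<equiv> Min {norm (\<zeta> (Suc l)) / norm (\<zeta> l) | l. 1 \<le> l \<and> l < d \<and> norm (\<zeta> l) < norm (\<zeta> (Suc l))}"
    and "I \<equiv> {l. 1 \<le> l \<and> l \<le> d - 1 \<and> norm (\<zeta> l) < norm (\<zeta> (Suc l))} \<union> {0, d}"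
  assumes R_def: "R = \<rho> ^ (2 ^ N)"
    and a: "\<And>i1 i2. successive I i1 i2 \<Longrightarrow> real m \<ge> real i2 - real i1"
    and b0: "2 ^ d / R < 1"
    and b1: "(2 / 2 ^ N) * ln (2 ^ m + 2 ^ d / R) - (4 / 2 ^ N) * ln (1 - 2 ^ d / R) < E"
    and b2: "E < ln \<rho> / 2"
    and c: "i < j" "j < k" "k \<le> d"
  shows "(successive I i j \<and> (\<forall>x\<in>I. \<not> (j < x \<and> x < k)) \<longrightarrow>
            graeffe_S f N i j < graeffe_S f N j k - ereal E)
       \<and> (successive I i k \<longrightarrow> graeffe_S f N i j > graeffe_S f N j k - ereal E)"
proof -
  interpret sorted_roots f \<zeta> d
    using f0 roots ordered not_all_eq by unfold_locales
  have I: "I = jumps" and defect: "defect N = 2 ^ d / R"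
    by (simp_all add: I_def jumps_def defect_def R_def \<rho>_def gap_ratio_def)
  have m: "i2 - i1 \<le> m" if "successive jumps i1 i2" for i1 i2
    using a[of i1 i2] that I by (simp add: successive_def)
  have "2 * lower_error N m + 4 * upper_error N < E"
    using b1 by (simp add: lower_error_def upper_error_def defect field_simps)
  moreover have "0 \<le> upper_error N"
    using b0 defect upper_error_nonneg by simp
  ultimately have "2 * (lower_error N m + upper_error N) < E"
    and "2 * (lower_error N m + upper_error N) + E < ln gap_ratio"
    using b2 by (simp_all add: \<rho>_def gap_ratio_def)
  then show ?thesis
    using graeffe_S_lt_at_jump[of i j k N m E] graeffe_S_gt_in_block[of i k j N m E] m c b0
    unfolding I defect by auto
qed

end
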